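(* Let $a\in \mathcal{A}^d$ and $x\in\mathcal{A}$. Then the following are equivalent: (1) $a\in \mathcal{A}^{\mathrm{gcEP}}$ and $a^{\mathrm{gcEP}}=x$. (2) $xax=x$, $(ax)^*=ax$, $(xa-1)a^d=0$ and $im(x)\subseteq im(a^d)$. (3) $xax=x$, $\ell(x)=\ell(x^* )=\ell(a^d)$.
   Context: $\mathcal{A}$ is a complex Banach *-algebra with identity. $\mathcal{A}^{qnil}$ is the set of quasinilpotent elements ($\lim_n\|a^n\|^{1/n}=0$). $a\in\mathcal{A}^d$ means $a$ has a generalized Drazin inverse $a^d$, i.e. $a^d$ satisfies $a(a^d)^2=a^d$, $aa^d=a^da$, $a-a^2a^d\in\mathcal{A}^{qnil}$. An element $a$ has a generalized core-EP inverse if there is $x\in\mathcal{A}$ with $x=ax^2$, $(ax)^*=ax$, $\lim_{n\to\infty}\|a^n-xa^{n+1}\|^{1/n}=0$; such $x$ is unique and is denoted $a^{\mathrm{gcEP}}$, and $\mathcal{A}^{\mathrm{gcEP}}$ denotes the set of such elements. $\ell(\cdot)$ denotes the left annihilator, and $im(y)$ denotes the image (principal right ideal) $y\mathcal{A}$. *)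

theory Defs
  imports "HOL-Analysis.Analysis"
begin

class complex_banach_star_algebra = banach + real_normed_algebra_1 +
  fixes cscale :: "complex \<Rightarrow> 'a \<Rightarrow> 'a"
    and invol :: "'a \<Rightarrow> 'a"
  assumes cscale_of_real: "cscale (complex_of_real r) x = scaleR r x"
    and cscale_add_left: "cscale (c + d) x = cscale c x + cscale d x"
    and cscale_add_right: "cscale c (x + y) = cscale c x + cscale c y"
    and cscale_mult: "cscale (c * d) x = cscale c (cscale d x)"
    and cscale_norm: "norm (cscale c x) = cmod c * norm x"
    and cscale_mult_left: "cscale c (x * y) = cscale c x * y"
    and cscale_mult_right: "cscale c (x * y) = x * cscale c y"
    and invol_invol: "invol (invol x) = x"
    and invol_add: "invol (x + y) = invol x + invol y"
    and invol_mult: "invol (x * y) = invol y * invol x"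
    and invol_cscale: "invol (cscale c x) = cscale (cnj c) (invol x)"

definition qnil :: "'a::real_normed_algebra_1 \<Rightarrow> bool" where
  "qnil a \<longleftrightarrow> (\<lambda>n. root n (norm (a ^ n))) \<longlonglongrightarrow> 0"

definition is_gDrazin :: "'a::real_normed_algebra_1 \<Rightarrow> 'a \<Rightarrow> bool" where
  "is_gDrazin a y \<longleftrightarrow> a * y ^ 2 = y \<and> a * y = y * a \<and> qnil (a - a ^ 2 * y)"

definition has_gDrazin :: "'a::real_normed_algebra_1 \<Rightarrow> bool" where
  "has_gDrazin a \<longleftrightarrow> (\<exists>y. is_gDrazin a y)"

definition gDrazin :: "'a::real_normed_algebra_1 \<Rightarrow> 'a" where
  "gDrazin a = (THE y. is_gDrazin a y)"

definition is_gcEP :: "'a::complex_banach_star_algebra \<Rightarrow> 'a \<Rightarrow> bool" where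
  "is_gcEP a x \<longleftrightarrow> x = a * x ^ 2 \<and> invol (a * x) = a * x \<and>
     (\<lambda>n. root n (norm (a ^ n - x * a ^ (n + 1)))) \<longlonglongrightarrow> 0"

definition has_gcEP :: "'a::complex_banach_star_algebra \<Rightarrow> bool" where
  "has_gcEP a \<longleftrightarrow> (\<exists>x. is_gcEP a x)"

definition gcEP :: "'a::complex_banach_star_algebra \<Rightarrow> 'a" where
  "gcEP a = (THE x. is_gcEP a x)"

definition lann :: "'a::ring \<Rightarrow> 'a set" where
  "lann y = {z. z * y = 0}"

definition im :: "'a::ring \<Rightarrow> 'a set" where
  "im y = {y * z | z. True}"

end

theory Submission
  imports Defs
begin

text \<open>Let \<open>p = a a\<^sup>d\<close>: an idempotent commuting with \<open>a\<close>, with \<open>a (1 - p)\<close> quasinilpotent.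
  An element whose norm is bounded by \<open>C D\<^sup>n r\<^sub>n\<close> for all \<open>n \<ge> 1\<close>, where \<open>r\<^sub>n\<^sup>1\<^sup>/\<^sup>n \<rightarrow> 0\<close>,
  vanishes. If \<open>x\<close> is the generalized core-EP inverse, then
  \<open>(1 - p) x = (a (1 - p))\<^sup>n x\<^sup>n x\<close> and \<open>(x a - 1) a\<^sup>d = (x a\<^sup>n\<^sup>+\<^sup>1 - a\<^sup>n) (a\<^sup>d)\<^sup>n a\<^sup>d\<close>,
  so \<open>x = p x\<close> and \<open>x a a\<^sup>d = a\<^sup>d\<close>; the first identity is \<open>im x \<subseteq> im a\<^sup>d\<close>. Conversely these
  two identities give \<open>a\<^sup>n - x a\<^sup>n\<^sup>+\<^sup>1 = (1 - x a) (a (1 - p))\<^sup>n\<close>, hence the limit condition,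
  and they make the self-adjoint idempotents \<open>a x\<close> for two such \<open>x\<close> absorb each other, hence
  coincide. Under them \<open>a x\<close>, \<open>p\<close>, \<open>x\<close> and \<open>a\<^sup>d\<close> divide each other on the right, so they
  have the same left annihilator; and an idempotent with the same left annihilator as its
  adjoint is self-adjoint.\<close>

lemma eq_0_if_norm_le_geometric_root_null:
  fixes w :: "'a::real_normed_vector" and r :: "nat \<Rightarrow> real"
  assumes lim: "(\<lambda>n. root n (r n)) \<longlonglongrightarrow> 0" and r_nonneg: "\<And>n. r n \<ge> 0"
    and "C \<ge> 0" "D \<ge> 0"
    and bound: "\<And>n. n \<ge> 1 \<Longrightarrow> norm w \<le> C * D ^ n * r n"
  shows "w = 0"
proof -
  define t where "t = 1 / (2 * (D + 1))"
  have "t > 0" and Dt: "D * t \<le> 1/2"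
    using \<open>D \<ge> 0\<close> by (simp_all add: t_def field_simps)
  have "eventually (\<lambda>n. root n (r n) < t) sequentially"
    using lim \<open>t > 0\<close> by (simp add: order_tendsto_iff)
  then have "eventually (\<lambda>n. norm w \<le> C * (1/2) ^ n) sequentially"
    using eventually_ge_at_top[of 1]
  proof eventually_elim
    case (elim n)
    have "r n = root n (r n) ^ n"
      using elim r_nonneg[of n] by simp
    also have "\<dots> \<le> t ^ n"
      by (rule power_mono) (use elim r_nonneg[of n] in auto)
    finally have "r n \<le> t ^ n" .
    have "norm w \<le> C * D ^ n * r n"
      using bound elim by auto
    also have "\<dots> \<le> C * D ^ n * t ^ n"
      using \<open>r n \<le> t ^ n\<close> \<open>C \<ge> 0\<close> \<open>D \<ge> 0\<close> by (simp add: mult_left_mono)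
    also have "\<dots> = C * (D * t) ^ n"
      by (simp add: power_mult_distrib mult.assoc)
    also have "\<dots> \<le> C * (1/2) ^ n"
      using Dt \<open>C \<ge> 0\<close> \<open>D \<ge> 0\<close> \<open>t > 0\<close> by (simp add: mult_left_mono power_mono)
    finally show ?case .
  qed
  moreover have "(\<lambda>n. C * (1/2::real) ^ n) \<longlonglongrightarrow> 0"
    by (intro tendsto_mult_right_zero LIMSEQ_power_zero) simp
  ultimately have "norm w \<le> 0"
    by (intro tendsto_lowerbound) auto
  then show ?thesis
    by simp
qed

lemma eq_0_if_eq_power_mult_root_null:
  fixes w c :: "'a::real_normed_algebra_1"
  assumes "(\<lambda>n. root n (norm (b n))) \<longlonglongrightarrow> 0"
    and "\<And>n. n \<ge> 1 \<Longrightarrow> w = c ^ n * b n"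
  shows "w = 0"
proof (rule eq_0_if_norm_le_geometric_root_null[OF assms(1), where C = 1 and D = "norm c"])
  fix n :: nat
  assume "n \<ge> 1"
  have "norm w \<le> norm (c ^ n) * norm (b n)"
    using assms(2)[OF \<open>n \<ge> 1\<close>] by (simp add: norm_mult_ineq)
  also have "\<dots> \<le> norm c ^ n * norm (b n)"
    by (simp add: mult_right_mono norm_power_ineq)
  finally show "norm w \<le> 1 * norm c ^ n * norm (b n)"
    by simp
qed simp_all

lemma eq_0_if_eq_mult_power_root_null:
  fixes w c e :: "'a::real_normed_algebra_1"
  assumes "(\<lambda>n. root n (norm (b n))) \<longlonglongrightarrow> 0"
    and "\<And>n. n \<ge> 1 \<Longrightarrow> w = b n * c ^ n * e"
  shows "w = 0"
proof (rule eq_0_if_norm_le_geometric_root_null[OF assms(1), where C = "norm e" and D = "norm c"])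
  fix n :: nat
  assume "n \<ge> 1"
  have "norm w \<le> norm (b n) * norm (c ^ n) * norm e"
    using assms(2)[OF \<open>n \<ge> 1\<close>] norm_mult_ineq[of "b n * c ^ n" e]
      mult_right_mono[OF norm_mult_ineq[of "b n" "c ^ n"] norm_ge_zero[of e]]
    by simp
  also have "\<dots> \<le> norm (b n) * norm c ^ n * norm e"
    by (simp add: mult_left_mono mult_right_mono norm_power_ineq)
  finally show "norm w \<le> norm e * norm c ^ n * norm (b n)"
    by (simp add: mult_ac)
qed simp_all

lemma root_norm_mult_left_null:
  fixes c :: "'a::real_normed_algebra"
  assumes lim: "(\<lambda>n. root n (norm (b n))) \<longlonglongrightarrow> 0"
  shows "(\<lambda>n. root n (norm (c * b n))) \<longlonglongrightarrow> 0"
proof (rule tendsto_sandwich[of "\<lambda>n. 0" _ _ "\<lambda>n. root n (norm c + 1) * root n (norm (b n))"])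
  show "eventually (\<lambda>n. 0 \<le> root n (norm (c * b n))) sequentially"
    by (simp add: real_root_ge_zero)
  show "eventually (\<lambda>n. root n (norm (c * b n)) \<le> root n (norm c + 1) * root n (norm (b n)))
    sequentially"
    using eventually_ge_at_top[of 1]
  proof eventually_elim
    case (elim n)
    have "norm (c * b n) \<le> (norm c + 1) * norm (b n)"
      using norm_mult_ineq[of c "b n"] norm_ge_zero[of "b n"]
      by (simp only: distrib_right mult_1_left)
    then show ?case
      using elim by (simp add: real_root_mult[symmetric])
  qed
  show "(\<lambda>n. root n (norm c + 1) * root n (norm (b n))) \<longlonglongrightarrow> 0"
    using tendsto_mult[OF LIMSEQ_root_const lim] by (simp add: add_nonneg_pos)
qed simp

lemma power_mult_commuting:
  fixes x y :: "'a::monoid_mult"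
  assumes "x * y = y * x"
  shows "(x * y) ^ n = x ^ n * y ^ n"
proof (induction n)
  case (Suc n)
  have "(x * y) ^ Suc n = x * (y * x ^ n) * y ^ n"
    by (simp add: Suc mult.assoc)
  also have "\<dots> = x ^ Suc n * y ^ Suc n"
    by (simp add: power_commuting_commutes[OF assms, symmetric] mult.assoc)
  finally show ?case .
qed simp

lemma power_idem:
  fixes e :: "'a::monoid_mult"
  assumes "e * e = e" and "n \<ge> 1"
  shows "e ^ n = e"
  using assms(2) by (induction n rule: dec_induct) (simp_all add: assms(1) power_Suc2)

lemma power_mult_power_absorb:
  fixes a x :: "'a::monoid_mult"
  assumes "a * x ^ 2 = x"
  shows "a ^ n * x ^ n * x = x"
proof -
  have "a ^ n * x ^ Suc n = x"
  proof (induction n)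
    case (Suc n)
    have "a ^ Suc n * x ^ Suc (Suc n) = a ^ n * (a * x ^ 2) * x ^ n"
      unfolding power_Suc2[of a] power_Suc[of x] power2_eq_square by (simp only: mult.assoc)
    then show ?case
      using Suc by (simp only: assms mult.assoc power_Suc)
  qed simp
  then show ?thesis
    by (simp only: power_Suc2 mult.assoc)
qed

lemma ex_the_eq_iff:
  assumes "\<And>y z. P y \<Longrightarrow> P z \<Longrightarrow> y = z"
  shows "(\<exists>y. P y) \<and> (THE y. P y) = x \<longleftrightarrow> P x"
  using assms by (metis the_equality)

lemma lann_eq_if_mult:
  fixes x y :: "'a::ring"
  assumes "x = y * u" and "y = x * v"
  shows "lann x = lann y"
proof -
  have sub: "lann w \<subseteq> lann (w * t)" for w t :: 'a
    by (auto simp: lann_def mult.assoc[symmetric])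
  show ?thesis
  proof (rule subset_antisym)
    show "lann x \<subseteq> lann y"
      using sub[of x v] unfolding assms(2)[symmetric] .
    show "lann y \<subseteq> lann x"
      using sub[of y u] unfolding assms(1)[symmetric] .
  qed
qed

lemma selfadjoint_eq_if_mult_eq:
  fixes e f :: "'a::complex_banach_star_algebra"
  assumes "invol e = e" and "invol f = f" and "f * e = e" and "e * f = f"
  shows "e = f"
proof -
  have "e = invol (f * e)"
    using assms(1,3) by simp
  also have "\<dots> = e * f"
    using assms(1,2) by (simp add: invol_mult)
  finally show ?thesis
    using assms(4) by simp
qed

lemma selfadjoint_if_lann_invol_eq:
  fixes e :: "'a::complex_banach_star_algebra"
  assumes "e * e = e" and "lann (invol e) = lann e"
  shows "invol e = e"
proof -
  have "invol e * invol e = invol e"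
    using assms(1) by (metis invol_mult)
  then have "(1 - invol e) * invol e = 0"
    by (simp add: algebra_simps)
  then have "(1 - invol e) * e = 0"
    using assms(2) by (auto simp: lann_def)
  then have "e = invol e * e"
    by (simp add: algebra_simps)
  then show ?thesis
    by (metis invol_invol invol_mult)
qed

lemma lann_invol_outer_inverse:
  fixes a x :: "'a::complex_banach_star_algebra"
  assumes "x * a * x = x"
  shows "lann (invol x) = lann (invol (a * x))"
proof (rule lann_eq_if_mult)
  show "invol x = invol (a * x) * invol x"
    using assms by (metis invol_mult mult.assoc)
qed (rule invol_mult)

subsection \<open>Generalized Drazin inverses\<close>

lemma is_gDrazin_commute: "is_gDrazin a d \<Longrightarrow> a * d = d * a"
  by (simp add: is_gDrazin_def)

lemma is_gDrazin_absorb: "is_gDrazin a d \<Longrightarrow> a * d * d = d"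
  unfolding is_gDrazin_def power2_eq_square by (metis mult.assoc)

lemma is_gDrazin_idem: "is_gDrazin a d \<Longrightarrow> a * d * (a * d) = a * d"
  by (metis is_gDrazin_absorb is_gDrazin_commute mult.assoc)

lemma is_gDrazin_qnil:
  assumes "is_gDrazin a d"
  shows "qnil (a * (1 - a * d))"
proof -
  have "a * (1 - a * d) = a - a ^ 2 * d"
    by (simp add: power2_eq_square right_diff_distrib mult.assoc)
  then show ?thesis
    using assms unfolding is_gDrazin_def by metis
qed

lemma is_gDrazin_power:
  assumes "is_gDrazin a d" and "n \<ge> 1"
  shows "a ^ n * d ^ n = a * d" and "d ^ n * a ^ n = a * d"
  using power_mult_commuting[OF is_gDrazin_commute[OF assms(1)], of n]
    power_mult_commuting[OF is_gDrazin_commute[OF assms(1), symmetric], of n]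
    power_idem[OF is_gDrazin_idem[OF assms(1)] assms(2)] is_gDrazin_commute[OF assms(1)]
  by simp_all

lemma is_gDrazin_qnil_power:
  assumes "is_gDrazin a d" and "n \<ge> 1"
  shows "(a * (1 - a * d)) ^ n = a ^ n * (1 - a * d)"
    and "(a * (1 - a * d)) ^ n = (1 - a * d) * a ^ n"
proof -
  have comm: "a * (1 - a * d) = (1 - a * d) * a"
    using is_gDrazin_commute[OF assms(1)]
    by (simp add: right_diff_distrib left_diff_distrib) (metis mult.assoc)
  have "(1 - a * d) * (1 - a * d) = 1 - a * d"
    using is_gDrazin_idem[OF assms(1)] by (simp add: algebra_simps)
  then have "(a * (1 - a * d)) ^ n = a ^ n * (1 - a * d)"
    using power_mult_commuting[OF comm, of n] power_idem assms(2) by metis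
  then show "(a * (1 - a * d)) ^ n = a ^ n * (1 - a * d)"
    and "(a * (1 - a * d)) ^ n = (1 - a * d) * a ^ n"
    using power_commuting_commutes[OF comm, of n] by simp_all
qed

lemma is_gDrazin_unique:
  assumes y: "is_gDrazin a y" and z: "is_gDrazin a z"
  shows "y = z"
proof -
  define p q where "p = a * y" and "q = a * z"
  have "p * (1 - q) = 0"
  proof (rule eq_0_if_eq_power_mult_root_null)
    show "(\<lambda>n. root n (norm ((a * (1 - q)) ^ n))) \<longlonglongrightarrow> 0"
      using is_gDrazin_qnil[OF z] by (simp add: qnil_def q_def)
    show "p * (1 - q) = y ^ n * (a * (1 - q)) ^ n" if "n \<ge> 1" for n
      using is_gDrazin_power(2)[OF y that] is_gDrazin_qnil_power(1)[OF z that]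
      by (simp add: p_def q_def mult.assoc[symmetric])
  qed
  moreover have "(1 - p) * q = 0"
  proof (rule eq_0_if_eq_mult_power_root_null)
    show "(\<lambda>n. root n (norm ((a * (1 - p)) ^ n))) \<longlonglongrightarrow> 0"
      using is_gDrazin_qnil[OF y] by (simp add: qnil_def p_def)
    show "(1 - p) * q = (a * (1 - p)) ^ n * z ^ n * 1" if "n \<ge> 1" for n
      using is_gDrazin_power(1)[OF z that] is_gDrazin_qnil_power(2)[OF y that]
      by (simp add: p_def q_def mult.assoc)
  qed
  ultimately have "p = q"
    by (simp add: algebra_simps)
  have "y = y * (a * y)"
    using is_gDrazin_absorb[OF y] is_gDrazin_commute[OF y] by (metis mult.assoc)
  also have "\<dots> = y * (a * z)"
    using \<open>p = q\<close> by (simp add: p_def q_def)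
  also have "\<dots> = a * y * z"
    using is_gDrazin_commute[OF y] by (metis mult.assoc)
  also have "\<dots> = a * z * z"
    using \<open>p = q\<close> by (simp add: p_def q_def)
  also have "\<dots> = z"
    by (rule is_gDrazin_absorb[OF z])
  finally show ?thesis .
qed

lemma gDrazin_eq: "is_gDrazin a d \<Longrightarrow> gDrazin a = d"
  unfolding gDrazin_def by (rule the_equality) (auto intro: is_gDrazin_unique)

lemma im_subset_gDrazin_iff:
  assumes "is_gDrazin a d"
  shows "im x \<subseteq> im d \<longleftrightarrow> x = a * d * x"
proof
  assume "im x \<subseteq> im d"
  moreover have "x \<in> im x"
    unfolding im_def by (metis (mono_tags) mem_Collect_eq mult_1_right)
  ultimately obtain w where "x = d * w"
    unfolding im_def by blast
  then show "x = a * d * x"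
    using is_gDrazin_absorb[OF assms] by (simp add: mult.assoc[symmetric])
next
  assume "x = a * d * x"
  then have x: "x = d * a * x"
    by (subst (asm) is_gDrazin_commute[OF assms])
  have "x * z = d * (a * x * z)" for z
    by (subst (1) x) (simp only: mult.assoc)
  then show "im x \<subseteq> im d"
    unfolding im_def by blast
qed

subsection \<open>Characterizations of the generalized core-EP inverse\<close>

lemma gcEP_conditions_mult:
  assumes d: "is_gDrazin a d" and xad: "x * a * d = d" and x: "x = a * d * x"
  shows "x = d * (a * x)" and "a * x * (a * d) = a * d" and "a * d * (a * x) = a * x"
proof -
  have "d * (a * x) = a * d * x"
    by (simp only: is_gDrazin_commute[OF d] mult.assoc)
  with x show x_d: "x = d * (a * x)"
    by (rule trans[OF _ sym])
  show "a * x * (a * d) = a * d"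
    using xad by (simp add: mult.assoc)
  show "a * d * (a * x) = a * x"
    by (simp only: mult.assoc x_d[symmetric])
qed

lemma is_gcEP_eq_mult:
  assumes d: "is_gDrazin a d" and "is_gcEP a x"
  shows "x = a * d * x"
proof -
  have "(1 - a * d) * x = 0"
  proof (rule eq_0_if_eq_mult_power_root_null)
    show "(\<lambda>n. root n (norm ((a * (1 - a * d)) ^ n))) \<longlonglongrightarrow> 0"
      using is_gDrazin_qnil[OF d] by (simp add: qnil_def)
    show "(1 - a * d) * x = (a * (1 - a * d)) ^ n * x ^ n * x" if "n \<ge> 1" for n
      using power_mult_power_absorb[of a x n] \<open>is_gcEP a x\<close> is_gDrazin_qnil_power(2)[OF d that]
      by (simp add: is_gcEP_def mult.assoc)
  qed
  then show ?thesis
    by (simp add: algebra_simps)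
qed

lemma is_gcEP_mult_gDrazin:
  assumes d: "is_gDrazin a d" and "is_gcEP a x"
  shows "x * a * d = d"
proof -
  have "(x * a - 1) * d = 0"
  proof (rule eq_0_if_eq_mult_power_root_null)
    show "(\<lambda>n. root n (norm (x * a ^ (n + 1) - a ^ n))) \<longlonglongrightarrow> 0"
      using \<open>is_gcEP a x\<close> by (simp add: is_gcEP_def norm_minus_commute)
    show "(x * a - 1) * d = (x * a ^ (n + 1) - a ^ n) * d ^ n * d" if "n \<ge> 1" for n
    proof -
      have "(x * a - 1) * d = (x * a - 1) * (a ^ n * d ^ n) * d"
        using is_gDrazin_absorb[OF d] is_gDrazin_power(1)[OF d that] by (simp add: mult.assoc)
      then show ?thesis
        by (simp add: algebra_simps power_Suc)
    qed
  qed
  then show ?thesis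
    by (simp add: algebra_simps)
qed

lemma is_gcEP_if_conditions:
  assumes d: "is_gDrazin a d" and sa: "invol (a * x) = a * x"
    and xad: "x * a * d = d" and x: "x = a * d * x"
  shows "is_gcEP a x"
proof -
  have "a * x ^ 2 = a * x * (a * d * x)"
    using arg_cong[OF x, of "\<lambda>t. a * x * t"] by (simp add: power2_eq_square mult.assoc)
  also have "\<dots> = a * d * x"
    using gcEP_conditions_mult(2)[OF d xad x] by (metis mult.assoc)
  finally have x2: "a * x ^ 2 = x"
    using x by simp
  have "x * a * (a * d) = x * a * d * a"
    using is_gDrazin_commute[OF d] by (metis mult.assoc)
  also have "\<dots> = a * d"
    using xad is_gDrazin_commute[OF d] by simp
  finally have xa_p: "(1 - x * a) * (1 - a * d) = 1 - x * a"
    by (simp add: algebra_simps)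
  have "(1 - x * a) * (a * (1 - a * d)) ^ n = a ^ n - x * a ^ (n + 1)" if "n \<ge> 1" for n
  proof -
    have "(1 - x * a) * (a * (1 - a * d)) ^ n = (1 - x * a) * (1 - a * d) * a ^ n"
      using is_gDrazin_qnil_power(2)[OF d that] by (simp add: mult.assoc)
    also have "\<dots> = (1 - x * a) * a ^ n"
      by (simp only: xa_p)
    also have "\<dots> = a ^ n - x * a ^ (n + 1)"
      by (simp add: left_diff_distrib mult.assoc)
    finally show ?thesis .
  qed
  then have "eventually (\<lambda>n. root n (norm ((1 - x * a) * (a * (1 - a * d)) ^ n)) =
    root n (norm (a ^ n - x * a ^ (n + 1)))) sequentially"
    by (intro eventually_sequentiallyI[of 1]) simp
  moreover have "(\<lambda>n. root n (norm ((1 - x * a) * (a * (1 - a * d)) ^ n))) \<longlonglongrightarrow> 0"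
    using is_gDrazin_qnil[OF d] by (intro root_norm_mult_left_null) (simp add: qnil_def)
  ultimately have "(\<lambda>n. root n (norm (a ^ n - x * a ^ (n + 1)))) \<longlonglongrightarrow> 0"
    by (rule Lim_transform_eventually[rotated])
  with x2 sa show ?thesis
    by (simp add: is_gcEP_def)
qed

lemma is_gcEP_iff:
  assumes d: "is_gDrazin a d"
  shows "is_gcEP a x \<longleftrightarrow>
    x * a * x = x \<and> invol (a * x) = a * x \<and> x * a * d = d \<and> x = a * d * x"
proof
  assume "is_gcEP a x"
  then have xad: "x * a * d = d" and x: "x = a * d * x"
    using is_gcEP_mult_gDrazin[OF d] is_gcEP_eq_mult[OF d] by blast+
  note x_d = gcEP_conditions_mult(1)[OF d xad x]
  have "x * a * x = x * a * d * (a * x)"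
    using x_d by (metis mult.assoc)
  also have "\<dots> = x"
    by (simp only: xad x_d[symmetric])
  finally show "x * a * x = x \<and> invol (a * x) = a * x \<and> x * a * d = d \<and> x = a * d * x"
    using \<open>is_gcEP a x\<close> xad x by (simp add: is_gcEP_def)
qed (use is_gcEP_if_conditions[OF d] in blast)

lemma is_gcEP_unique:
  assumes d: "is_gDrazin a d" and "is_gcEP a x" and "is_gcEP a y"
  shows "x = y"
proof -
  from \<open>is_gcEP a x\<close> have sa_x: "invol (a * x) = a * x" and xad: "x * a * d = d"
    and x: "x = a * d * x"
    using is_gcEP_iff[OF d] by blast+
  from \<open>is_gcEP a y\<close> have sa_y: "invol (a * y) = a * y" and yad: "y * a * d = d"
    and y: "y = a * d * y"
    using is_gcEP_iff[OF d] by blast+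
  note mult_x = gcEP_conditions_mult[OF d xad x] and mult_y = gcEP_conditions_mult[OF d yad y]
  have "a * y * (a * x) = a * x"
    using mult_x(3) mult_y(2) by (metis mult.assoc)
  moreover have "a * x * (a * y) = a * y"
    using mult_x(2) mult_y(3) by (metis mult.assoc)
  ultimately have "a * x = a * y"
    by (rule selfadjoint_eq_if_mult_eq[OF sa_x sa_y])
  then show ?thesis
    using mult_x(1) mult_y(1) by simp
qed

lemma gcEP_eq_iff:
  assumes "is_gDrazin a d"
  shows "has_gcEP a \<and> gcEP a = x \<longleftrightarrow> is_gcEP a x"
  unfolding has_gcEP_def gcEP_def using is_gcEP_unique[OF assms] by (rule ex_the_eq_iff)

lemma lann_eq_lann_gDrazin:
  assumes d: "is_gDrazin a d" and xad: "x * a * d = d" and x: "x = a * d * x"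
  shows "lann x = lann d" and "lann (a * x) = lann d"
proof -
  note mult_x = gcEP_conditions_mult[OF d xad x]
  have "d = x * (a * d)"
    by (simp only: xad mult.assoc[symmetric])
  with mult_x(1) show "lann x = lann d"
    by (rule lann_eq_if_mult)
  have "lann (a * x) = lann (a * d)"
    using mult_x(3)[symmetric] mult_x(2)[symmetric] by (rule lann_eq_if_mult)
  also have "\<dots> = lann d"
    using is_gDrazin_commute[OF d] is_gDrazin_absorb[OF d]
    by (intro lann_eq_if_mult[where u = a and v = d]) simp_all
  finally show "lann (a * x) = lann d" .
qed

lemma gcEP_conditions_iff_lann:
  assumes d: "is_gDrazin a d" and xax: "x * a * x = x"
  shows "invol (a * x) = a * x \<and> x * a * d = d \<and> x = a * d * x \<longleftrightarrow>
    lann x = lann (invol x) \<and> lann (invol x) = lann d"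
proof (intro iffI; elim conjE)
  assume sa: "invol (a * x) = a * x" and xad: "x * a * d = d" and x: "x = a * d * x"
  have "lann (invol x) = lann (a * x)"
    using lann_invol_outer_inverse[OF xax] sa by simp
  then show "lann x = lann (invol x) \<and> lann (invol x) = lann d"
    using lann_eq_lann_gDrazin[OF d xad x] by simp
next
  assume lann_x: "lann x = lann (invol x)" and lann_invol_x: "lann (invol x) = lann d"
  have "x * a - 1 \<in> lann x"
    using xax by (simp add: lann_def algebra_simps)
  then have "x * a - 1 \<in> lann d"
    using lann_x lann_invol_x by simp
  then have xad: "x * a * d = d"
    by (simp add: lann_def algebra_simps)
  have "1 - a * d \<in> lann d"
    using is_gDrazin_absorb[OF d] by (simp add: lann_def algebra_simps)
  then have "1 - a * d \<in> lann x"
    using lann_x lann_invol_x by simp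
  then have x: "x = a * d * x"
    by (simp add: lann_def algebra_simps)
  have "a * x * (a * x) = a * x"
    using xax by (simp add: mult.assoc)
  moreover have "lann (invol (a * x)) = lann (a * x)"
    using lann_x lann_invol_x lann_eq_lann_gDrazin[OF d xad x] lann_invol_outer_inverse[OF xax]
    by simp
  ultimately have "invol (a * x) = a * x"
    by (rule selfadjoint_if_lann_invol_eq)
  with xad x show "invol (a * x) = a * x \<and> x * a * d = d \<and> x = a * d * x"
    by (intro conjI)
qed

theorem theorem2p1:
  fixes a x :: "'a::complex_banach_star_algebra"
  assumes "has_gDrazin a"
  shows "((has_gcEP a \<and> gcEP a = x) \<longleftrightarrow>
           (x * a * x = x \<and> invol (a * x) = a * x \<and> (x * a - 1) * gDrazin a = 0
            \<and> im x \<subseteq> im (gDrazin a)))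
       \<and> ((has_gcEP a \<and> gcEP a = x) \<longleftrightarrow>
           (x * a * x = x \<and> lann x = lann (invol x) \<and> lann (invol x) = lann (gDrazin a)))"
proof -
  obtain d where d: "is_gDrazin a d"
    using assms unfolding has_gDrazin_def by blast
  have "(x * a - 1) * d = 0 \<longleftrightarrow> x * a * d = d"
    by (simp add: algebra_simps)
  then show ?thesis
    unfolding gcEP_eq_iff[OF d] is_gcEP_iff[OF d] gDrazin_eq[OF d] im_subset_gDrazin_iff[OF d]
    using gcEP_conditions_iff_lann[OF d] by blast
qed

end
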